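(* Let $\bar Q$ be a gentle bound quiver with finitely many strings, and define $\pi_\downarrow,\pi^\uparrow:\mathrm{Bicl}(\bar Q)\to\mathrm{Bicl}(\bar Q)$ by $\pi_\downarrow(S)=\{\sigma\in\mathcal S^\pm(\bar Q):\Sigma_{\mathrm{bot}}(\sigma)\subseteq S\}$ and $\pi^\uparrow(S)=\{\sigma\in\mathcal S^\pm(\bar Q):\Sigma_{\mathrm{top}}(\sigma)\cap S\ne\emptyset\}$. Then (i) $\pi_\downarrow(S)\subseteq S\subseteq\pi^\uparrow(S)$ for every $S\in\mathrm{Bicl}(\bar Q)$; (ii) $\pi_\downarrow\circ\pi_\downarrow=\pi_\downarrow\circ\pi^\uparrow=\pi_\downarrow$ and $\pi^\uparrow\circ\pi^\uparrow=\pi^\uparrow\circ\pi_\downarrow=\pi^\uparrow$; (iii) $\pi_\downarrow$ and $\pi^\uparrow$ are order preserving. Consequently the fibers of $\pi^\uparrow$ and $\pi_\downarrow$ coincide, and the relation $S\equiv T\iff\pi_\downarrow(S)=\pi_\downarrow(T)\iff\pi^\uparrow(S)=\pi^\uparrow(T)$ is an order congruence on $\mathrm{Bicl}(\bar Q)$.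
   Context: A gentle bound quiver is $\bar Q=(Q,I)$, $Q$ finite (paths composed left to right), $I$ admissible generated by length-two paths, each vertex with at most two incoming and two outgoing arrows, and for each arrow $\beta$ at most one $\alpha$ with $t(\alpha)=s(\beta),\alpha\beta\notin I$, at most one with $\alpha\beta\in I$, and dually at most one $\gamma$ with $s(\gamma)=t(\beta),\beta\gamma\notin I$ and at most one with $\beta\gamma\in I$. Strings: composable reduced words $\alpha_1^{\epsilon_1}\cdots\alpha_\ell^{\epsilon_\ell}$ in arrows and inverse arrows with no factor $\pi^{\pm1}$ for a path $\pi\in I$, or length-zero $\varepsilon_v$; $\mathcal S^\pm(\bar Q)$ = strings up to inversion. Top/bottom substrings of a string $\sigma=\alpha_1^{\epsilon_1}\cdots\alpha_\ell^{\epsilon_\ell}$: a substring $\alpha_i^{\epsilon_i}\cdots\alpha_j^{\epsilon_j}$ (including length-zero substrings at vertices of $\sigma$) is top if ($i=1$ or $\epsilon_{i-1}=-1$) and ($j=\ell$ or $\epsilon_{j+1}=1$), i.e. at each endpoint $\sigma$ ends or has an arrow pointing away; bottom if at each endpoint $\sigma$ ends or has an arrow pointing towards it. $\Sigma_{\mathrm{top}}(\sigma),\Sigma_{\mathrm{bot}}(\sigma)$ are the sets of undirected strings so obtained (both contain $\sigma$). Closure: $\sigma\circ\tau$ = set of undirected strings obtained by joining an endpoint of $\sigma$ to an endpoint of $\tau$ by one arrow $\gamma^{\pm1}$, $\gamma\in Q_1$; $\overline S$ = union of all $\sigma_1\circ\cdots\circ\sigma_\ell$, $\ell\ge1$, $\sigma_i\in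 S$. Biclosed: $S$ and its complement in $\mathcal S^\pm(\bar Q)$ are closed. $\mathrm{Bicl}(\bar Q)$: biclosed sets ordered by inclusion (a lattice). It is known that $\pi_\downarrow(S),\pi^\uparrow(S)$ are biclosed for biclosed $S$. An order congruence on a poset $P$ is an equivalence relation whose classes are intervals and such that the maps sending an element to the minimum (resp. maximum) of its class are order preserving. *)

theory Defs
  imports Main
begin

text \<open>A bound quiver: vertices, arrows, source and target maps, and the set of
length-two relations (pairs (alpha, beta) with tgt alpha = src beta meaning the
path alpha beta, composed left to right) generating the ideal I.\<close>

record ('v, 'a) bquiver =
  verts :: "'v set"
  arrs  :: "'a set"
  src   :: "'a \<Rightarrow> 'v"
  tgt   :: "'a \<Rightarrow> 'v"
  rels  :: "('a \<times> 'a) set"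

definition qpath :: "('v, 'a) bquiver \<Rightarrow> 'a list \<Rightarrow> bool" where
  "qpath Q p \<longleftrightarrow> p \<noteq> [] \<and> set p \<subseteq> arrs Q \<and>
     (\<forall>i. Suc i < length p \<longrightarrow> tgt Q (p ! i) = src Q (p ! Suc i))"

definition gentle :: "('v, 'a) bquiver \<Rightarrow> bool" where
  "gentle Q \<longleftrightarrow>
     finite (verts Q) \<and> finite (arrs Q) \<and>
     (\<forall>\<alpha>\<in>arrs Q. src Q \<alpha> \<in> verts Q \<and> tgt Q \<alpha> \<in> verts Q) \<and>
     rels Q \<subseteq> {(\<alpha>, \<beta>). \<alpha> \<in> arrs Q \<and> \<beta> \<in> arrs Q \<and> tgt Q \<alpha> = src Q \<beta>} \<and>
     \<comment> \<open>admissibility: all sufficiently long paths lie in I\<close>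
     (\<exists>m. \<forall>p. qpath Q p \<and> length p \<ge> m \<longrightarrow>
          (\<exists>i. Suc i < length p \<and> (p ! i, p ! Suc i) \<in> rels Q)) \<and>
     (\<forall>v\<in>verts Q. card {\<alpha>\<in>arrs Q. tgt Q \<alpha> = v} \<le> 2 \<and> card {\<alpha>\<in>arrs Q. src Q \<alpha> = v} \<le> 2) \<and>
     (\<forall>\<beta>\<in>arrs Q. \<forall>\<alpha>\<in>arrs Q. \<forall>\<alpha>'\<in>arrs Q.
        tgt Q \<alpha> = src Q \<beta> \<and> tgt Q \<alpha>' = src Q \<beta> \<and>
        (\<alpha>, \<beta>) \<notin> rels Q \<and> (\<alpha>', \<beta>) \<notin> rels Q \<longrightarrow> \<alpha> = \<alpha>') \<and>
     (\<forall>\<beta>\<in>arrs Q. \<forall>\<alpha>\<in>arrs Q. \<forall>\<alpha>'\<in>arrs Q.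
        (\<alpha>, \<beta>) \<in> rels Q \<and> (\<alpha>', \<beta>) \<in> rels Q \<longrightarrow> \<alpha> = \<alpha>') \<and>
     (\<forall>\<beta>\<in>arrs Q. \<forall>\<gamma>\<in>arrs Q. \<forall>\<gamma>'\<in>arrs Q.
        src Q \<gamma> = tgt Q \<beta> \<and> src Q \<gamma>' = tgt Q \<beta> \<and>
        (\<beta>, \<gamma>) \<notin> rels Q \<and> (\<beta>, \<gamma>') \<notin> rels Q \<longrightarrow> \<gamma> = \<gamma>') \<and>
     (\<forall>\<beta>\<in>arrs Q. \<forall>\<gamma>\<in>arrs Q. \<forall>\<gamma>'\<in>arrs Q.
        (\<beta>, \<gamma>) \<in> rels Q \<and> (\<beta>, \<gamma>') \<in> rels Q \<longrightarrow> \<gamma> = \<gamma>')"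

text \<open>A letter (alpha, True) is the arrow alpha, (alpha, False) is its inverse.
A (directed) string is a starting vertex together with a word of letters;
the starting vertex is only relevant for length-zero strings.\<close>

type_synonym ('v, 'a) str = "'v \<times> ('a \<times> bool) list"

definition lstart :: "('v, 'a) bquiver \<Rightarrow> 'a \<times> bool \<Rightarrow> 'v" where
  "lstart Q l = (if snd l then src Q (fst l) else tgt Q (fst l))"

definition lend :: "('v, 'a) bquiver \<Rightarrow> 'a \<times> bool \<Rightarrow> 'v" where
  "lend Q l = (if snd l then tgt Q (fst l) else src Q (fst l))"

definition str_end :: "('v, 'a) bquiver \<Rightarrow> ('v, 'a) str \<Rightarrow> 'v" where
  "str_end Q \<sigma> = (if snd \<sigma> = [] then fst \<sigma> else lend Q (last (snd \<sigma>)))"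

definition vertex_at :: "('v, 'a) bquiver \<Rightarrow> ('v, 'a) str \<Rightarrow> nat \<Rightarrow> 'v" where
  "vertex_at Q \<sigma> k = (if k = 0 then fst \<sigma> else lend Q (snd \<sigma> ! (k - 1)))"

definition is_string :: "('v, 'a) bquiver \<Rightarrow> ('v, 'a) str \<Rightarrow> bool" where
  "is_string Q \<sigma> \<longleftrightarrow>
     (let v = fst \<sigma>; w = snd \<sigma> in
       v \<in> verts Q \<and> (\<forall>l\<in>set w. fst l \<in> arrs Q) \<and>
       (w \<noteq> [] \<longrightarrow> v = lstart Q (hd w)) \<and>
       (\<forall>i. Suc i < length w \<longrightarrow>
          lend Q (w ! i) = lstart Q (w ! Suc i) \<and>
          \<comment> \<open>reduced\<close>
          \<not> (fst (w ! i) = fst (w ! Suc i) \<and> snd (w ! i) \<noteq> snd (w ! Suc i)) \<and>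
          \<comment> \<open>no factor alpha beta with alpha beta in I\<close>
          \<not> (snd (w ! i) \<and> snd (w ! Suc i) \<and> (fst (w ! i), fst (w ! Suc i)) \<in> rels Q) \<and>
          \<comment> \<open>no factor beta^-1 alpha^-1 with alpha beta in I\<close>
          \<not> (\<not> snd (w ! i) \<and> \<not> snd (w ! Suc i) \<and> (fst (w ! Suc i), fst (w ! i)) \<in> rels Q)))"

definition str_inv :: "('v, 'a) bquiver \<Rightarrow> ('v, 'a) str \<Rightarrow> ('v, 'a) str" where
  "str_inv Q \<sigma> = (str_end Q \<sigma>, rev (map (\<lambda>(\<alpha>, b). (\<alpha>, \<not> b)) (snd \<sigma>)))"

text \<open>Undirected string: the string together with its inverse.\<close>
definition und :: "('v, 'a) bquiver \<Rightarrow> ('v, 'a) str \<Rightarrow> ('v, 'a) str set" where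
  "und Q \<sigma> = {\<sigma>, str_inv Q \<sigma>}"

definition Spm :: "('v, 'a) bquiver \<Rightarrow> ('v, 'a) str set set" where
  "Spm Q = {und Q \<sigma> | \<sigma>. is_string Q \<sigma>}"

text \<open>Substring between positions a and b (letters a+1..b, 1-indexed).\<close>
definition substr :: "('v, 'a) bquiver \<Rightarrow> ('v, 'a) str \<Rightarrow> nat \<Rightarrow> nat \<Rightarrow> ('v, 'a) str" where
  "substr Q \<sigma> a b = (vertex_at Q \<sigma> a, drop a (take b (snd \<sigma>)))"

definition Sigma_top :: "('v, 'a) bquiver \<Rightarrow> ('v, 'a) str \<Rightarrow> ('v, 'a) str set set" where
  "Sigma_top Q \<sigma> = {und Q (substr Q \<sigma> a b) | a b.
     a \<le> b \<and> b \<le> length (snd \<sigma>) \<and>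
     (a = 0 \<or> \<not> snd (snd \<sigma> ! (a - 1))) \<and>
     (b = length (snd \<sigma>) \<or> snd (snd \<sigma> ! b))}"

definition Sigma_bot :: "('v, 'a) bquiver \<Rightarrow> ('v, 'a) str \<Rightarrow> ('v, 'a) str set set" where
  "Sigma_bot Q \<sigma> = {und Q (substr Q \<sigma> a b) | a b.
     a \<le> b \<and> b \<le> length (snd \<sigma>) \<and>
     (a = 0 \<or> snd (snd \<sigma> ! (a - 1))) \<and>
     (b = length (snd \<sigma>) \<or> \<not> snd (snd \<sigma> ! b))}"

text \<open>sigma \<circ> tau: join an endpoint of sigma to an endpoint of tau by one letter.
Since X and Y contain both orientations, all pairs of endpoints are covered.\<close>
definition str_compose :: "('v, 'a) bquiver \<Rightarrow> ('v, 'a) str set \<Rightarrow> ('v, 'a) str set \<Rightarrow> ('v, 'a) str set set" where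
  "str_compose Q X Y = {und Q (fst \<sigma>, snd \<sigma> @ [l] @ snd \<tau>) | \<sigma> \<tau> l.
      \<sigma> \<in> X \<and> \<tau> \<in> Y \<and> fst l \<in> arrs Q \<and>
      lstart Q l = str_end Q \<sigma> \<and> lend Q l = fst \<tau> \<and>
      is_string Q (fst \<sigma>, snd \<sigma> @ [l] @ snd \<tau>)}"

inductive_set str_closure :: "('v, 'a) bquiver \<Rightarrow> ('v, 'a) str set set \<Rightarrow> ('v, 'a) str set set"
  for Q S where
  base: "X \<in> S \<Longrightarrow> X \<in> str_closure Q S"
| step: "X \<in> str_closure Q S \<Longrightarrow> Y \<in> S \<Longrightarrow> Z \<in> str_compose Q X Y \<Longrightarrow> Z \<in> str_closure Q S"

definition str_closed :: "('v, 'a) bquiver \<Rightarrow> ('v, 'a) str set set \<Rightarrow> bool" where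
  "str_closed Q S \<longleftrightarrow> str_closure Q S = S"

definition biclosed :: "('v, 'a) bquiver \<Rightarrow> ('v, 'a) str set set \<Rightarrow> bool" where
  "biclosed Q S \<longleftrightarrow> S \<subseteq> Spm Q \<and> str_closed Q S \<and> str_closed Q (Spm Q - S)"

definition Bicl :: "('v, 'a) bquiver \<Rightarrow> ('v, 'a) str set set set" where
  "Bicl Q = {S. biclosed Q S}"

definition pi_down :: "('v, 'a) bquiver \<Rightarrow> ('v, 'a) str set set \<Rightarrow> ('v, 'a) str set set" where
  "pi_down Q S = {und Q \<sigma> | \<sigma>. is_string Q \<sigma> \<and> Sigma_bot Q \<sigma> \<subseteq> S}"

definition pi_up :: "('v, 'a) bquiver \<Rightarrow> ('v, 'a) str set set \<Rightarrow> ('v, 'a) str set set" where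
  "pi_up Q S = {und Q \<sigma> | \<sigma>. is_string Q \<sigma> \<and> Sigma_top Q \<sigma> \<inter> S \<noteq> {}}"

definition order_congruence :: "'p set \<Rightarrow> ('p \<Rightarrow> 'p \<Rightarrow> bool) \<Rightarrow> ('p \<times> 'p) set \<Rightarrow> bool" where
  "order_congruence P le E \<longleftrightarrow> equiv P E \<and>
     (\<exists>mn mx. (\<forall>x\<in>P. mn x \<in> P \<and> mx x \<in> P \<and>
                  E `` {x} = {y\<in>P. le (mn x) y \<and> le y (mx x)}) \<and>
              (\<forall>x\<in>P. \<forall>y\<in>P. le x y \<longrightarrow> le (mn x) (mn y) \<and> le (mx x) (mx y)))"

end

theory Submission
  imports Defs
begin

(* A Sigma_p-substring of a Sigma_p-substring of s is one of s, which makes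
   pi_below p idempotent, and pi_above p is dual to pi_below p under complementation in S^pm.
   The heart of the matter is the absorption law pi_below p (pi_above (~p) S) = pi_below p S for closed S:
   if a Sigma_p-substring t of s contains a Sigma_(~p)-substring r of itself lying in S, then the pieces
   of t left and right of r, with the connecting letters removed, are shorter Sigma_p-substrings of s,
   so t is rebuilt from r by closure. Complementation turns this into pi_above p (pi_below (~p) S) =
   pi_above p S for coclosed S. Biclosedness of pi_below p S comes from concatenations s g t: a
   Sigma_p-substring of s g t lies in s, lies in t, or is joined from Sigma_p-substrings of both, and
   depending on the orientation of g, s or t is itself a Sigma_p-substring of s g t. The order
   congruence is the kernel of pi_down, whose classes are the intervals between pi_down S and pi_up S. *)

section \<open>Order congruences from a pair of projections\<close>

lemma order_congruence_kernel:
  fixes P :: "'p::order set"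
  assumes closed: "\<And>x. x \<in> P \<Longrightarrow> d x \<in> P \<and> u x \<in> P"
    and bounds: "\<And>x. x \<in> P \<Longrightarrow> d x \<le> x \<and> x \<le> u x"
    and absorb: "\<And>x. x \<in> P \<Longrightarrow> d (d x) = d x \<and> d (u x) = d x \<and> u (d x) = u x"
    and mono: "\<And>x y. x \<in> P \<Longrightarrow> y \<in> P \<Longrightarrow> x \<le> y \<Longrightarrow> d x \<le> d y \<and> u x \<le> u y"
  shows "order_congruence P (\<le>) {(x, y). x \<in> P \<and> y \<in> P \<and> d x = d y}"
    (is "order_congruence P (\<le>) ?E")
proof -
  have "equiv P ?E"
    by (rule equivI) (auto simp: refl_on_def sym_def trans_def)
  moreover have "?E `` {x} = {y \<in> P. d x \<le> y \<and> y \<le> u x}" if x: "x \<in> P" for x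
  proof
    show "?E `` {x} \<subseteq> {y \<in> P. d x \<le> y \<and> y \<le> u x}"
    proof clarify
      fix y assume y: "y \<in> P" "d x = d y"
      have "u x = u y" using absorb[OF x] absorb[OF y(1)] y(2) by metis
      then show "d x \<le> y \<and> y \<le> u x" using bounds[OF y(1)] y(2) by simp
    qed
    show "{y \<in> P. d x \<le> y \<and> y \<le> u x} \<subseteq> ?E `` {x}"
    proof
      fix y assume "y \<in> {y \<in> P. d x \<le> y \<and> y \<le> u x}"
      then have y: "y \<in> P" "d x \<le> y" "y \<le> u x" by auto
      have "d x \<le> d y" using mono[OF _ y(1,2)] closed x absorb by metis
      moreover have "d y \<le> d x" using mono[OF y(1) _ y(3)] closed x absorb by metis
      ultimately have "d x = d y" by (rule antisym)
      then show "y \<in> ?E `` {x}" using x y(1) by blast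
    qed
  qed
  ultimately show ?thesis
    unfolding order_congruence_def using closed mono by blast
qed

section \<open>Strings, substrings and inverse strings\<close>

definition adjacent :: "('v, 'a) bquiver \<Rightarrow> 'a \<times> bool \<Rightarrow> 'a \<times> bool \<Rightarrow> bool" where
  "adjacent Q l l' \<longleftrightarrow> lend Q l = lstart Q l' \<and> \<not> (fst l = fst l' \<and> snd l \<noteq> snd l') \<and>
     \<not> (snd l \<and> snd l' \<and> (fst l, fst l') \<in> rels Q) \<and>
     \<not> (\<not> snd l \<and> \<not> snd l' \<and> (fst l', fst l) \<in> rels Q)"

lemma is_string_iff:
  "is_string Q (v, w) \<longleftrightarrow> v \<in> verts Q \<and> (\<forall>l\<in>set w. fst l \<in> arrs Q) \<and>
     (w \<noteq> [] \<longrightarrow> v = lstart Q (hd w)) \<and> (\<forall>i. Suc i < length w \<longrightarrow> adjacent Q (w ! i) (w ! Suc i))"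
  by (simp add: is_string_def adjacent_def Let_def)

lemma lend_lstart_flip: "lend Q (\<alpha>, \<not> b) = lstart Q (\<alpha>, b)" "lstart Q (\<alpha>, \<not> b) = lend Q (\<alpha>, b)"
  by (auto simp: lend_def lstart_def)

lemma vertex_at_eq_lstart:
  assumes "is_string Q (v, w)" "k < length w"
  shows "vertex_at Q (v, w) k = lstart Q (w ! k)"
proof (cases k)
  case 0
  then show ?thesis using assms by (auto simp: is_string_iff vertex_at_def hd_conv_nth)
next
  case (Suc j)
  then have "adjacent Q (w ! j) (w ! Suc j)" using assms by (auto simp: is_string_iff)
  then show ?thesis using Suc by (simp add: vertex_at_def adjacent_def)
qed

lemma substr_substr:
  assumes "c \<le> d" "d \<le> length w" "a \<le> b" "b \<le> d - c"
  shows "substr Q (substr Q (v, w) c d) a b = substr Q (v, w) (c + a) (c + b)"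
proof -
  have "drop a (take b (drop c (take d w))) = drop (c + a) (take (c + b) w)"
    using assms by (simp add: take_drop drop_drop min_def add.commute)
  moreover have "vertex_at Q (vertex_at Q (v, w) c, drop c (take d w)) a = vertex_at Q (v, w) (c + a)"
    using assms by (auto simp: vertex_at_def)
  ultimately show ?thesis by (simp add: substr_def)
qed

lemma str_end_substr:
  assumes "a \<le> b" "b \<le> length w"
  shows "str_end Q (substr Q (v, w) a b) = vertex_at Q (v, w) b"
  using assms by (auto simp: str_end_def substr_def vertex_at_def last_conv_nth min_def)

lemma substr_append_letter:
  assumes "a \<le> m" "m < b" "b \<le> length w"
  shows "substr Q (v, w) a b =
    (fst (substr Q (v, w) a m), snd (substr Q (v, w) a m) @ [w ! m] @ snd (substr Q (v, w) (Suc m) b))"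
proof -
  have "take b w = take m w @ w ! m # drop (Suc m) (take b w)"
    using id_take_nth_drop[of m "take b w"] assms by (simp add: min_def)
  then have "drop a (take b w) = drop a (take m w @ w ! m # drop (Suc m) (take b w))"
    by simp
  then have "drop a (take b w) = drop a (take m w) @ w ! m # drop (Suc m) (take b w)"
    using assms by simp
  then show ?thesis by (simp add: substr_def)
qed

lemma self_in_und: "x \<in> und Q x"
  by (simp add: und_def)

lemma snd_str_inv: "snd (str_inv Q (v, w)) = rev (map (\<lambda>l. (fst l, \<not> snd l)) w)"
  by (simp add: str_inv_def case_prod_beta')

lemma nth_str_inv:
  "i < length w \<Longrightarrow>
     snd (str_inv Q (v, w)) ! i = (fst (w ! (length w - Suc i)), \<not> snd (w ! (length w - Suc i)))"
  by (simp add: snd_str_inv rev_nth)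

lemma length_str_inv [simp]: "length (snd (str_inv Q x)) = length (snd x)"
  by (simp add: str_inv_def)

lemma str_inv_str_inv:
  assumes "is_string Q (v, w)"
  shows "str_inv Q (str_inv Q (v, w)) = (v, w)"
proof -
  have "snd (str_inv Q (str_inv Q (v, w))) = w"
    by (simp add: str_inv_def case_prod_beta' rev_map comp_def)
  moreover have "fst (str_inv Q (str_inv Q (v, w))) = v"
  proof (cases "w = []")
    case True
    then show ?thesis by (simp add: str_inv_def str_end_def)
  next
    case False
    then have "str_end Q (str_inv Q (v, w)) = lend Q (fst (hd w), \<not> snd (hd w))"
      by (simp add: str_end_def snd_str_inv last_rev hd_map)
    also have "\<dots> = v"
      using False assms by (simp add: is_string_iff lend_lstart_flip)
    finally show ?thesis by (simp add: str_inv_def)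
  qed
  ultimately show ?thesis by (metis prod.collapse)
qed

lemma und_str_inv: "is_string Q x \<Longrightarrow> und Q (str_inv Q x) = und Q x"
  by (cases x) (auto simp: und_def str_inv_str_inv)

lemma vertex_at_str_inv:
  assumes s: "is_string Q (v, w)" and b: "b \<le> length w"
  shows "vertex_at Q (str_inv Q (v, w)) (length w - b) = vertex_at Q (v, w) b"
proof (cases "b = length w")
  case True
  then show ?thesis
    by (cases "w = []") (auto simp: vertex_at_def str_inv_def str_end_def last_conv_nth)
next
  case False
  then have "vertex_at Q (str_inv Q (v, w)) (length w - b)
      = lend Q (snd (str_inv Q (v, w)) ! (length w - b - 1))"
    using b by (simp add: vertex_at_def)
  also have "\<dots> = lstart Q (w ! b)"
    using False b by (simp add: nth_str_inv Suc_diff_Suc lend_lstart_flip)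
  also have "\<dots> = vertex_at Q (v, w) b"
    using vertex_at_eq_lstart[OF s] False b by simp
  finally show ?thesis .
qed

lemma str_inv_substr:
  assumes s: "is_string Q (v, w)" and ab: "a \<le> b" "b \<le> length w"
  shows "str_inv Q (substr Q (v, w) a b) = substr Q (str_inv Q (v, w)) (length w - b) (length w - a)"
proof -
  let ?f = "\<lambda>l. (fst l, \<not> snd l)"
  have "fst (str_inv Q (substr Q (v, w) a b)) = vertex_at Q (v, w) b"
    using str_end_substr[OF ab] by (simp add: str_inv_def)
  moreover have "fst (substr Q (str_inv Q (v, w)) (length w - b) (length w - a)) = vertex_at Q (v, w) b"
    using vertex_at_str_inv[OF s ab(2)] by (simp add: substr_def)
  moreover have "drop (length w - b) (take (length w - a) (rev (map ?f w)))
      = rev (map ?f (drop a (take b w)))"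
    using ab by (simp add: take_rev drop_rev take_drop drop_map take_map)
  then have "snd (str_inv Q (substr Q (v, w) a b))
      = snd (substr Q (str_inv Q (v, w)) (length w - b) (length w - a))"
    by (simp add: substr_def snd_str_inv str_inv_def[of Q "substr Q (v, w) a b"] case_prod_beta')
  ultimately show ?thesis by (metis prod.collapse)
qed

locale quiver =
  fixes Q :: "('v, 'a) bquiver"
  assumes arrow_ends_in_verts: "\<alpha> \<in> arrs Q \<Longrightarrow> src Q \<alpha> \<in> verts Q \<and> tgt Q \<alpha> \<in> verts Q"

lemma gentle_quiver: "gentle Q \<Longrightarrow> quiver Q"
  by (simp add: gentle_def quiver_def)

context quiver
begin

lemma vertex_at_in_verts:
  assumes "is_string Q (v, w)" "k \<le> length w"
  shows "vertex_at Q (v, w) k \<in> verts Q"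
proof (cases k)
  case 0
  then show ?thesis using assms by (auto simp: is_string_iff vertex_at_def)
next
  case (Suc j)
  then have "fst (w ! j) \<in> arrs Q" using assms by (auto simp: is_string_iff)
  then show ?thesis
    using Suc arrow_ends_in_verts by (auto simp: vertex_at_def lend_def)
qed

lemma is_string_substr:
  assumes s: "is_string Q (v, w)" and ab: "a \<le> b" "b \<le> length w"
  shows "is_string Q (substr Q (v, w) a b)"
proof -
  let ?u = "drop a (take b w)"
  have nth: "?u ! i = w ! (a + i)" if "i < b - a" for i
    using that ab by simp
  have "vertex_at Q (v, w) a = lstart Q (hd ?u)" if "?u \<noteq> []"
    using that ab nth[of 0] vertex_at_eq_lstart[OF s, of a] by (simp add: hd_conv_nth)
  moreover have "adjacent Q (?u ! i) (?u ! Suc i)" if "Suc i < length ?u" for i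
    using that s ab nth[of i] nth[of "Suc i"] by (auto simp: is_string_iff)
  moreover have "\<forall>l\<in>set ?u. fst l \<in> arrs Q"
    using s by (auto simp: is_string_iff dest: in_set_dropD in_set_takeD)
  ultimately show ?thesis
    using vertex_at_in_verts[OF s] ab unfolding substr_def is_string_iff snd_conv fst_conv by simp
qed

end

section \<open>Substrings delimited by letters of a given orientation\<close>

definition sigma_cut :: "bool \<Rightarrow> ('v, 'a) str \<Rightarrow> nat \<Rightarrow> nat \<Rightarrow> bool" where
  "sigma_cut p x a b \<longleftrightarrow> a \<le> b \<and> b \<le> length (snd x) \<and>
     (a = 0 \<or> snd (snd x ! (a - 1)) = p) \<and> (b = length (snd x) \<or> snd (snd x ! b) \<noteq> p)"

definition Sigma_pol :: "('v, 'a) bquiver \<Rightarrow> bool \<Rightarrow> ('v, 'a) str \<Rightarrow> ('v, 'a) str set set" where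
  "Sigma_pol Q p x = {und Q (substr Q x a b) | a b. sigma_cut p x a b}"

definition pi_below :: "('v, 'a) bquiver \<Rightarrow> bool \<Rightarrow> ('v, 'a) str set set \<Rightarrow> ('v, 'a) str set set" where
  "pi_below Q p S = {und Q \<sigma> | \<sigma>. is_string Q \<sigma> \<and> Sigma_pol Q p \<sigma> \<subseteq> S}"

definition pi_above :: "('v, 'a) bquiver \<Rightarrow> bool \<Rightarrow> ('v, 'a) str set set \<Rightarrow> ('v, 'a) str set set" where
  "pi_above Q p S = {und Q \<sigma> | \<sigma>. is_string Q \<sigma> \<and> Sigma_pol Q p \<sigma> \<inter> S \<noteq> {}}"

lemma pi_down_eq_pi_below: "pi_down Q = pi_below Q True"
proof -
  have "Sigma_bot Q = Sigma_pol Q True"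
    by (rule ext) (simp add: Sigma_bot_def Sigma_pol_def sigma_cut_def)
  then show ?thesis by (simp add: pi_down_def pi_below_def fun_eq_iff)
qed

lemma pi_up_eq_pi_above: "pi_up Q = pi_above Q False"
proof -
  have "Sigma_top Q = Sigma_pol Q False"
    by (rule ext) (simp add: Sigma_top_def Sigma_pol_def sigma_cut_def)
  then show ?thesis by (simp add: pi_up_def pi_above_def fun_eq_iff)
qed

lemma sigma_cut_substr_iff:
  assumes "c \<le> d" "d \<le> length w"
  shows "sigma_cut p (substr Q (v, w) c d) a b \<longleftrightarrow> a \<le> b \<and> b \<le> d - c \<and>
     (a = 0 \<or> snd (w ! (c + a - 1)) = p) \<and> (b = d - c \<or> snd (w ! (c + b)) \<noteq> p)"
  using assms by (auto simp: sigma_cut_def substr_def)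

lemma sigma_cut_substr_lift:
  assumes cd: "c \<le> d" "d \<le> length w" and cut: "sigma_cut p (substr Q (v, w) c d) a b"
    and left: "a = 0 \<Longrightarrow> c = 0 \<or> snd (w ! (c - 1)) = p"
    and right: "b = d - c \<Longrightarrow> d = length w \<or> snd (w ! d) \<noteq> p"
  shows "sigma_cut p (v, w) (c + a) (c + b)"
    and "substr Q (substr Q (v, w) c d) a b = substr Q (v, w) (c + a) (c + b)"
proof -
  have ab: "a \<le> b" "b \<le> d - c" and "a = 0 \<or> snd (w ! (c + a - 1)) = p"
    and "b = d - c \<or> snd (w ! (c + b)) \<noteq> p"
    using cut by (simp_all only: sigma_cut_substr_iff[OF cd])
  then show "sigma_cut p (v, w) (c + a) (c + b)"
    using cd left right unfolding sigma_cut_def snd_conv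
    by (cases "a = 0"; cases "b = d - c") auto
  show "substr Q (substr Q (v, w) c d) a b = substr Q (v, w) (c + a) (c + b)"
    using substr_substr[OF cd ab] .
qed

lemma sigma_cut_str_inv:
  assumes ab: "a \<le> b" "b \<le> length w"
  shows "sigma_cut p (str_inv Q (v, w)) (length w - b) (length w - a) \<longleftrightarrow> sigma_cut p (v, w) a b"
proof -
  have "snd (snd (str_inv Q (v, w)) ! (length w - b - 1)) \<longleftrightarrow> \<not> snd (w ! b)" if "b \<noteq> length w"
    using that ab by (simp add: nth_str_inv Suc_diff_Suc)
  moreover have "snd (snd (str_inv Q (v, w)) ! (length w - a)) \<longleftrightarrow> \<not> snd (w ! (a - 1))" if "a \<noteq> 0"
    using that ab by (simp add: nth_str_inv Suc_diff_Suc)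
  ultimately show ?thesis
    using ab unfolding sigma_cut_def by (cases "a = 0"; cases "b = length w") auto
qed

lemma sigma_cut_str_inv_iff:
  "sigma_cut p (str_inv Q (v, w)) a' b' \<longleftrightarrow>
     (\<exists>a b. sigma_cut p (v, w) a b \<and> a' = length w - b \<and> b' = length w - a)"
proof
  assume cut: "sigma_cut p (str_inv Q (v, w)) a' b'"
  then have "a' \<le> b'" "b' \<le> length w" by (auto simp: sigma_cut_def)
  then show "\<exists>a b. sigma_cut p (v, w) a b \<and> a' = length w - b \<and> b' = length w - a"
    using cut sigma_cut_str_inv[of "length w - b'" "length w - a'" w p Q v]
    by (intro exI[of _ "length w - b'"] exI[of _ "length w - a'"]) auto
next
  assume "\<exists>a b. sigma_cut p (v, w) a b \<and> a' = length w - b \<and> b' = length w - a"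
  then obtain a b where "sigma_cut p (v, w) a b" "a' = length w - b" "b' = length w - a"
    by blast
  then show "sigma_cut p (str_inv Q (v, w)) a' b'"
    using sigma_cut_str_inv[of a b w p Q v] by (simp add: sigma_cut_def)
qed

lemma und_in_Sigma_pol: "und Q x \<in> Sigma_pol Q p x"
proof -
  have "substr Q x 0 (length (snd x)) = x" by (simp add: substr_def vertex_at_def)
  moreover have "sigma_cut p x 0 (length (snd x))" by (simp add: sigma_cut_def)
  ultimately show ?thesis unfolding Sigma_pol_def by (metis (mono_tags, lifting) mem_Collect_eq)
qed

lemma und_substr_in_Sigma_pol:
  assumes "c \<le> a" "a \<le> b" "b \<le> d" "d \<le> length w"
    and "a = c \<or> snd (w ! (a - 1)) = p" and "b = d \<or> snd (w ! b) \<noteq> p"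
  shows "und Q (substr Q (v, w) a b) \<in> Sigma_pol Q p (substr Q (v, w) c d)"
proof -
  have "c \<le> d" using assms by simp
  then have "sigma_cut p (substr Q (v, w) c d) (a - c) (b - c)"
    and "substr Q (substr Q (v, w) c d) (a - c) (b - c) = substr Q (v, w) a b"
    using sigma_cut_substr_iff[of c d w p Q v "a - c" "b - c"]
      substr_substr[of c d w "a - c" "b - c" Q v]
      assms by auto
  then show ?thesis unfolding Sigma_pol_def by (metis (mono_tags, lifting) mem_Collect_eq)
qed

lemma pi_below_subset: "pi_below Q p S \<subseteq> S"
  using und_in_Sigma_pol by (fastforce simp: pi_below_def)

lemma subset_pi_above: "S \<subseteq> Spm Q \<Longrightarrow> S \<subseteq> pi_above Q p S"
  using und_in_Sigma_pol by (fastforce simp: pi_above_def Spm_def)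

lemma pi_below_subset_Spm: "pi_below Q p S \<subseteq> Spm Q"
  by (auto simp: pi_below_def Spm_def)

lemma pi_below_mono: "S \<subseteq> T \<Longrightarrow> pi_below Q p S \<subseteq> pi_below Q p T"
  by (fastforce simp: pi_below_def)

lemma pi_above_mono: "S \<subseteq> T \<Longrightarrow> pi_above Q p S \<subseteq> pi_above Q p T"
  by (fastforce simp: pi_above_def)

context quiver
begin

lemma Sigma_str_inv:
  assumes s: "is_string Q (v, w)"
  shows "Sigma_pol Q p (str_inv Q (v, w)) = Sigma_pol Q p (v, w)"
proof -
  have same: "und Q (substr Q (str_inv Q (v, w)) (length w - b) (length w - a))
      = und Q (substr Q (v, w) a b)"
    if "sigma_cut p (v, w) a b" for a b
    using that str_inv_substr[OF s] und_str_inv is_string_substr[OF s]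
    by (metis (no_types, lifting) sigma_cut_def snd_conv)
  have "Sigma_pol Q p (str_inv Q (v, w))
      = {und Q (substr Q (str_inv Q (v, w)) (length w - b) (length w - a)) | a b.
          sigma_cut p (v, w) a b}"
    unfolding Sigma_pol_def sigma_cut_str_inv_iff by blast
  also have "\<dots> = Sigma_pol Q p (v, w)"
    unfolding Sigma_pol_def using same by (metis (no_types, lifting))
  finally show ?thesis .
qed

lemma Sigma_und:
  assumes "is_string Q x" "y \<in> und Q x"
  shows "Sigma_pol Q p y = Sigma_pol Q p x"
  using assms Sigma_str_inv by (cases x) (auto simp: und_def)

lemma Sigma_subset_Spm:
  assumes "is_string Q x"
  shows "Sigma_pol Q p x \<subseteq> Spm Q"
proof
  fix X assume "X \<in> Sigma_pol Q p x"
  then obtain a b where "X = und Q (substr Q x a b)" "sigma_cut p x a b"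
    by (auto simp: Sigma_pol_def)
  moreover have "is_string Q (substr Q x a b)" if "sigma_cut p x a b"
    using that assms is_string_substr by (cases x) (simp add: sigma_cut_def)
  ultimately show "X \<in> Spm Q" unfolding Spm_def by blast
qed

lemma Sigma_substr_subset:
  assumes "sigma_cut p (v, w) a b"
  shows "Sigma_pol Q p (substr Q (v, w) a b) \<subseteq> Sigma_pol Q p (v, w)"
proof
  fix X assume "X \<in> Sigma_pol Q p (substr Q (v, w) a b)"
  then obtain c d where X: "X = und Q (substr Q (substr Q (v, w) a b) c d)"
    and cut: "sigma_cut p (substr Q (v, w) a b) c d" by (auto simp: Sigma_pol_def)
  have ab: "a \<le> b" "b \<le> length w" using assms by (auto simp: sigma_cut_def)
  have "a = 0 \<or> snd (w ! (a - 1)) = p" "b = length w \<or> snd (w ! b) \<noteq> p"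
    using assms by (auto simp: sigma_cut_def)
  then have "sigma_cut p (v, w) (a + c) (a + d)" "X = und Q (substr Q (v, w) (a + c) (a + d))"
    using sigma_cut_substr_lift[OF ab cut] X by auto
  then show "X \<in> Sigma_pol Q p (v, w)"
    unfolding Sigma_pol_def by blast
qed

lemma und_in_pi_below_iff:
  assumes "is_string Q \<sigma>"
  shows "und Q \<sigma> \<in> pi_below Q p S \<longleftrightarrow> Sigma_pol Q p \<sigma> \<subseteq> S"
proof
  assume "und Q \<sigma> \<in> pi_below Q p S"
  then obtain \<sigma>' where "und Q \<sigma> = und Q \<sigma>'" "is_string Q \<sigma>'" "Sigma_pol Q p \<sigma>' \<subseteq> S"
    unfolding pi_below_def by blast
  moreover from this(1) have "\<sigma> \<in> und Q \<sigma>'" by (metis insertI1 und_def)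
  ultimately show "Sigma_pol Q p \<sigma> \<subseteq> S" using Sigma_und[of \<sigma>' \<sigma> p] by simp
qed (use assms in \<open>unfold pi_below_def, blast\<close>)

lemma und_in_pi_above_iff:
  assumes "is_string Q \<sigma>"
  shows "und Q \<sigma> \<in> pi_above Q p S \<longleftrightarrow> Sigma_pol Q p \<sigma> \<inter> S \<noteq> {}"
proof
  assume "und Q \<sigma> \<in> pi_above Q p S"
  then obtain \<sigma>' where "und Q \<sigma> = und Q \<sigma>'" "is_string Q \<sigma>'" "Sigma_pol Q p \<sigma>' \<inter> S \<noteq> {}"
    unfolding pi_above_def by blast
  moreover from this(1) have "\<sigma> \<in> und Q \<sigma>'" by (metis insertI1 und_def)
  ultimately show "Sigma_pol Q p \<sigma> \<inter> S \<noteq> {}" using Sigma_und[of \<sigma>' \<sigma> p] by simp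
qed (use assms in \<open>unfold pi_above_def, blast\<close>)

lemma mem_pi_below_iff:
  assumes "X \<in> Spm Q" "x \<in> X"
  shows "X \<in> pi_below Q p S \<longleftrightarrow> Sigma_pol Q p x \<subseteq> S"
proof -
  obtain x0 where x0: "is_string Q x0" "X = und Q x0" using assms(1) by (auto simp: Spm_def)
  then show ?thesis using und_in_pi_below_iff[OF x0(1)] Sigma_und[OF x0(1)] assms(2) by simp
qed

lemma pi_below_idem: "pi_below Q p (pi_below Q p S) = pi_below Q p S"
proof
  show "pi_below Q p S \<subseteq> pi_below Q p (pi_below Q p S)"
  proof
    fix X assume "X \<in> pi_below Q p S"
    then obtain v w where X: "X = und Q (v, w)" and s: "is_string Q (v, w)"
      and sub: "Sigma_pol Q p (v, w) \<subseteq> S"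
      by (auto simp: pi_below_def)
    have "Sigma_pol Q p (v, w) \<subseteq> pi_below Q p S"
    proof
      fix Y assume "Y \<in> Sigma_pol Q p (v, w)"
      then obtain a b where Y: "Y = und Q (substr Q (v, w) a b)" and cut: "sigma_cut p (v, w) a b"
        by (auto simp: Sigma_pol_def)
      have "is_string Q (substr Q (v, w) a b)"
        using cut is_string_substr[OF s] by (simp add: sigma_cut_def)
      then show "Y \<in> pi_below Q p S"
        using und_in_pi_below_iff Sigma_substr_subset[OF cut] sub Y by blast
    qed
    then show "X \<in> pi_below Q p (pi_below Q p S)" using und_in_pi_below_iff[OF s] X by blast
  qed
qed (rule pi_below_subset)

lemma pi_above_eq_compl: "pi_above Q p S = Spm Q - pi_below Q p (Spm Q - S)"
proof
  show "pi_above Q p S \<subseteq> Spm Q - pi_below Q p (Spm Q - S)"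
    using und_in_pi_below_iff by (fastforce simp: pi_above_def Spm_def)
  show "Spm Q - pi_below Q p (Spm Q - S) \<subseteq> pi_above Q p S"
  proof
    fix X assume X: "X \<in> Spm Q - pi_below Q p (Spm Q - S)"
    then obtain \<sigma> where s: "is_string Q \<sigma>" and X_eq: "X = und Q \<sigma>" by (auto simp: Spm_def)
    have "\<not> Sigma_pol Q p \<sigma> \<subseteq> Spm Q - S" using X X_eq und_in_pi_below_iff[OF s] by auto
    then have "Sigma_pol Q p \<sigma> \<inter> S \<noteq> {}" using Sigma_subset_Spm[OF s] by auto
    then show "X \<in> pi_above Q p S" using und_in_pi_above_iff[OF s] X_eq by auto
  qed
qed

lemma pi_above_idem: "pi_above Q p (pi_above Q p S) = pi_above Q p S"
proof -
  have "Spm Q - pi_above Q p S = pi_below Q p (Spm Q - S)"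
    using pi_above_eq_compl[of p S] pi_below_subset_Spm by blast
  then show ?thesis
    using pi_above_eq_compl[of p "pi_above Q p S"] pi_above_eq_compl[of p S] pi_below_idem by simp
qed

end

section \<open>Closed and biclosed sets\<close>

lemma str_compose_split:
  assumes "Z \<in> str_compose Q X Y"
  obtains v w m where "is_string Q (v, w)" "Z = und Q (v, w)" "m < length w"
    "substr Q (v, w) 0 m \<in> X" "substr Q (v, w) (Suc m) (length w) \<in> Y"
proof -
  obtain \<sigma> \<tau> l where Z: "Z = und Q (fst \<sigma>, snd \<sigma> @ [l] @ snd \<tau>)" and "\<sigma> \<in> X" "\<tau> \<in> Y"
    and "lend Q l = fst \<tau>" and "is_string Q (fst \<sigma>, snd \<sigma> @ [l] @ snd \<tau>)"
    using assms unfolding str_compose_def by blast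
  moreover have "substr Q (fst \<sigma>, snd \<sigma> @ [l] @ snd \<tau>) 0 (length (snd \<sigma>)) = \<sigma>"
    by (simp add: substr_def vertex_at_def)
  moreover have "substr Q (fst \<sigma>, snd \<sigma> @ [l] @ snd \<tau>) (Suc (length (snd \<sigma>)))
      (length (snd \<sigma> @ [l] @ snd \<tau>)) = \<tau>" if "lend Q l = fst \<tau>"
    using that by (simp add: substr_def vertex_at_def nth_append)
  ultimately show ?thesis
    using that[of "fst \<sigma>" "snd \<sigma> @ [l] @ snd \<tau>" "length (snd \<sigma>)"] by simp
qed

lemma str_closed_iff: "str_closed Q S \<longleftrightarrow> str_closure Q S \<subseteq> S"
  using str_closure.base by (auto simp: str_closed_def)

lemma biclosed_compl: "biclosed Q S \<Longrightarrow> biclosed Q (Spm Q - S)"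
  by (auto simp: biclosed_def Diff_Diff_Int Int_absorb1)

lemma BiclD:
  assumes "S \<in> Bicl Q"
  shows "str_closure Q S \<subseteq> S" "S \<subseteq> Spm Q" "str_closure Q (Spm Q - S) \<subseteq> Spm Q - S"
  using assms by (auto simp: Bicl_def biclosed_def str_closed_iff)

lemma pi_down_subset_subset_pi_up:
  assumes "S \<in> Bicl Q"
  shows "pi_down Q S \<subseteq> S \<and> S \<subseteq> pi_up Q S"
  using pi_below_subset subset_pi_above[OF BiclD(2)[OF assms]]
  by (simp add: pi_down_eq_pi_below pi_up_eq_pi_above)

lemma pi_down_pi_up_mono:
  assumes "S \<subseteq> T"
  shows "pi_down Q S \<subseteq> pi_down Q T \<and> pi_up Q S \<subseteq> pi_up Q T"
  using pi_below_mono[OF assms] pi_above_mono[OF assms]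
  by (simp add: pi_down_eq_pi_below pi_up_eq_pi_above)

context quiver
begin

lemma und_substr_in_compose:
  assumes s: "is_string Q (v, w)" and m: "a \<le> m" "m < b" "b \<le> length w"
  shows "und Q (substr Q (v, w) a b)
    \<in> str_compose Q (und Q (substr Q (v, w) a m)) (und Q (substr Q (v, w) (Suc m) b))"
proof -
  let ?\<sigma> = "substr Q (v, w) a m" and ?\<tau> = "substr Q (v, w) (Suc m) b"
  have split: "substr Q (v, w) a b = (fst ?\<sigma>, snd ?\<sigma> @ [w ! m] @ snd ?\<tau>)"
    by (rule substr_append_letter[OF m])
  have "fst (w ! m) \<in> arrs Q" using s m by (auto simp: is_string_iff)
  moreover have "lstart Q (w ! m) = str_end Q ?\<sigma>"
    using str_end_substr[of a m w Q v] vertex_at_eq_lstart[OF s, of m] m by simp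
  moreover have "lend Q (w ! m) = fst ?\<tau>" by (simp add: substr_def vertex_at_def)
  moreover have "is_string Q (fst ?\<sigma>, snd ?\<sigma> @ [w ! m] @ snd ?\<tau>)"
    using split is_string_substr[OF s, of a b] m by simp
  ultimately have "und Q (fst ?\<sigma>, snd ?\<sigma> @ [w ! m] @ snd ?\<tau>)
      \<in> str_compose Q (und Q ?\<sigma>) (und Q ?\<tau>)"
    unfolding str_compose_def using self_in_und by blast
  then show ?thesis by (simp only: split)
qed

lemma und_substr_in_closure:
  assumes "is_string Q (v, w)" "a \<le> m" "m < b" "b \<le> length w"
    and "und Q (substr Q (v, w) a m) \<in> str_closure Q S" "und Q (substr Q (v, w) (Suc m) b) \<in> S"
  shows "und Q (substr Q (v, w) a b) \<in> str_closure Q S"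
  using str_closure.step[OF assms(5,6) und_substr_in_compose[OF assms(1-4)]] .

lemma Sigma_subset_closed:
  assumes cl: "str_closure Q S \<subseteq> S" and s: "is_string Q (v, w)"
    and meets: "\<And>a b. sigma_cut p (v, w) a b \<Longrightarrow> Sigma_pol Q (\<not> p) (substr Q (v, w) a b) \<inter> S \<noteq> {}"
  shows "Sigma_pol Q p (v, w) \<subseteq> S"
proof -
  have "und Q (substr Q (v, w) a b) \<in> S" if "sigma_cut p (v, w) a b" for a b
    using that
  proof (induction "b - a" arbitrary: a b rule: less_induct)
    case less
    have ab: "a \<le> b" "b \<le> length w" "a = 0 \<or> snd (w ! (a - 1)) = p" "b = length w \<or> snd (w ! b) \<noteq> p"
      using less.prems by (auto simp: sigma_cut_def)
    obtain c d where cut: "sigma_cut (\<not> p) (substr Q (v, w) a b) c d"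
      and core: "und Q (substr Q (substr Q (v, w) a b) c d) \<in> S"
      using meets[OF less.prems] by (auto simp: Sigma_pol_def)
    have cd: "c \<le> d" "d \<le> b - a" "c = 0 \<or> snd (w ! (a + c - 1)) \<noteq> p" "d = b - a \<or> snd (w ! (a + d)) = p"
      using cut unfolding sigma_cut_substr_iff[OF ab(1,2)] by auto
    have core': "und Q (substr Q (v, w) (a + c) (a + d)) \<in> S"
      using core substr_substr[OF ab(1,2) cd(1,2), of Q v] by simp
    \<comment> \<open>the letters just outside the core point the wrong way for it to be a p-cut, so removing them
        leaves shorter p-cuts of the string on either side\<close>
    have left: "und Q (substr Q (v, w) a (a + d)) \<in> str_closure Q S"
    proof (cases "c = 0")
      case True
      then show ?thesis using core' str_closure.base by simp
    next
      case False
      have "sigma_cut p (v, w) a (a + c - 1)" using False ab cd by (auto simp: sigma_cut_def)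
      moreover have "a + c - 1 - a < b - a" using False cd by linarith
      ultimately have "und Q (substr Q (v, w) a (a + c - 1)) \<in> str_closure Q S"
        by (intro str_closure.base less.hyps)
      moreover have "Suc (a + c - 1) = a + c" "a \<le> a + c - 1" "a + c - 1 < a + d" "a + d \<le> length w"
        using False cd ab by auto
      ultimately show ?thesis
        using und_substr_in_closure[OF s, of a "a + c - 1" "a + d" S] core' by simp
    qed
    show ?case
    proof (cases "d = b - a")
      case True
      then show ?thesis using left cl ab by auto
    next
      case False
      then have "sigma_cut p (v, w) (Suc (a + d)) b" using ab cd by (auto simp: sigma_cut_def)
      then have "und Q (substr Q (v, w) (Suc (a + d)) b) \<in> S" using less.hyps False cd by simp
      then have "und Q (substr Q (v, w) a b) \<in> str_closure Q S"
        using und_substr_in_closure[OF s, of a "a + d" b S] left False cd ab by simp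
      then show ?thesis using cl by blast
    qed
  qed
  then show ?thesis by (auto simp: Sigma_pol_def)
qed

lemma pi_below_pi_above:
  assumes "str_closure Q S \<subseteq> S" "S \<subseteq> Spm Q"
  shows "pi_below Q p (pi_above Q (\<not> p) S) = pi_below Q p S"
proof
  show "pi_below Q p (pi_above Q (\<not> p) S) \<subseteq> pi_below Q p S"
  proof
    fix X assume "X \<in> pi_below Q p (pi_above Q (\<not> p) S)"
    then obtain v w where X: "X = und Q (v, w)" and s: "is_string Q (v, w)"
      and sub: "Sigma_pol Q p (v, w) \<subseteq> pi_above Q (\<not> p) S"
      by (auto simp: pi_below_def)
    have "Sigma_pol Q (\<not> p) (substr Q (v, w) a b) \<inter> S \<noteq> {}" if "sigma_cut p (v, w) a b" for a b
    proof -
      have "is_string Q (substr Q (v, w) a b)"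
        using that is_string_substr[OF s] by (simp add: sigma_cut_def)
      moreover have "und Q (substr Q (v, w) a b) \<in> pi_above Q (\<not> p) S"
        using that sub by (auto simp: Sigma_pol_def)
      ultimately show ?thesis using und_in_pi_above_iff by blast
    qed
    then have "Sigma_pol Q p (v, w) \<subseteq> S" using Sigma_subset_closed[OF assms(1) s] by blast
    then show "X \<in> pi_below Q p S" using und_in_pi_below_iff[OF s] X by blast
  qed
  show "pi_below Q p S \<subseteq> pi_below Q p (pi_above Q (\<not> p) S)"
    using pi_below_mono subset_pi_above[OF assms(2)] by blast
qed

lemma pi_above_pi_below:
  assumes "str_closure Q (Spm Q - S) \<subseteq> Spm Q - S" "S \<subseteq> Spm Q"
  shows "pi_above Q p (pi_below Q (\<not> p) S) = pi_above Q p S"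
proof -
  have "Spm Q - pi_below Q (\<not> p) S = pi_above Q (\<not> p) (Spm Q - S)"
    using pi_above_eq_compl[of "\<not> p" "Spm Q - S"] assms(2) by (simp add: Diff_Diff_Int Int_absorb1)
  then show ?thesis
    using pi_above_eq_compl[of p] pi_below_pi_above[OF assms(1) Diff_subset, of p] by simp
qed

lemma closed_pi_below:
  assumes cl: "str_closure Q S \<subseteq> S"
  shows "str_closure Q (pi_below Q p S) \<subseteq> pi_below Q p S"
proof
  fix Z assume "Z \<in> str_closure Q (pi_below Q p S)"
  then show "Z \<in> pi_below Q p S"
  proof (induction rule: str_closure.induct)
    case (step X Y Z)
    obtain v w m where s: "is_string Q (v, w)" and Z: "Z = und Q (v, w)" and m: "m < length w"
      and "substr Q (v, w) 0 m \<in> X" "substr Q (v, w) (Suc m) (length w) \<in> Y"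
      using step.hyps(3) by (rule str_compose_split)
    then have L: "Sigma_pol Q p (substr Q (v, w) 0 m) \<subseteq> S"
      and R: "Sigma_pol Q p (substr Q (v, w) (Suc m) (length w)) \<subseteq> S"
      using mem_pi_below_iff step.IH step.hyps(2) pi_below_subset_Spm by blast+
    have "und Q (substr Q (v, w) a b) \<in> S" if cut: "sigma_cut p (v, w) a b" for a b
    proof -
      have ab: "a \<le> b" "b \<le> length w" "a = 0 \<or> snd (w ! (a - 1)) = p" "b = length w \<or> snd (w ! b) \<noteq> p"
        using cut by (auto simp: sigma_cut_def)
      consider "b \<le> m" | "Suc m \<le> a" | "a \<le> m" "m < b" by linarith
      then show ?thesis
      proof cases
        case 1
        then show ?thesis using und_substr_in_Sigma_pol[of 0 a b m w p Q v] ab m L by auto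
      next
        case 2
        then show ?thesis using und_substr_in_Sigma_pol[of "Suc m" a b "length w" w p Q v] ab R by auto
      next
        case 3
        have "und Q (substr Q (v, w) a m) \<in> S"
          using und_substr_in_Sigma_pol[of 0 a m m w p Q v] ab 3 L by auto
        moreover have "und Q (substr Q (v, w) (Suc m) b) \<in> S"
          using und_substr_in_Sigma_pol[of "Suc m" "Suc m" b "length w" w p Q v] ab 3 R by auto
        ultimately show ?thesis
          using und_substr_in_closure[OF s 3 ab(2) str_closure.base] cl by blast
      qed
    qed
    then show ?case using und_in_pi_below_iff[OF s] Z by (auto simp: Sigma_pol_def)
  qed
qed

lemma coclosed_pi_below: "str_closure Q (Spm Q - pi_below Q p S) \<subseteq> Spm Q - pi_below Q p S"
proof
  fix Z assume "Z \<in> str_closure Q (Spm Q - pi_below Q p S)"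
  then show "Z \<in> Spm Q - pi_below Q p S"
  proof (induction rule: str_closure.induct)
    case (step X Y Z)
    obtain v w m where s: "is_string Q (v, w)" and Z: "Z = und Q (v, w)" and m: "m < length w"
      and "substr Q (v, w) 0 m \<in> X" "substr Q (v, w) (Suc m) (length w) \<in> Y"
      using step.hyps(3) by (rule str_compose_split)
    then have L: "\<not> Sigma_pol Q p (substr Q (v, w) 0 m) \<subseteq> S"
      and R: "\<not> Sigma_pol Q p (substr Q (v, w) (Suc m) (length w)) \<subseteq> S"
      using mem_pi_below_iff step.IH step.hyps(2) by blast+
    \<comment> \<open>one of the two factors is itself a p-cut, according to the orientation of the joining letter\<close>
    have "sigma_cut p (v, w) 0 m \<or> sigma_cut p (v, w) (Suc m) (length w)"
      using m by (auto simp: sigma_cut_def)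
    then have "\<not> Sigma_pol Q p (v, w) \<subseteq> S"
      using L R Sigma_substr_subset by blast
    then show ?case using und_in_pi_below_iff[OF s] Z s by (auto simp: Spm_def)
  qed
qed

lemma biclosed_pi_below: "biclosed Q S \<Longrightarrow> biclosed Q (pi_below Q p S)"
  using closed_pi_below coclosed_pi_below pi_below_subset_Spm
  by (simp add: biclosed_def str_closed_iff)

lemma biclosed_pi_above: "biclosed Q S \<Longrightarrow> biclosed Q (pi_above Q p S)"
  using biclosed_compl biclosed_pi_below pi_above_eq_compl by metis

lemma pi_down_pi_up_in_Bicl: "S \<in> Bicl Q \<Longrightarrow> pi_down Q S \<in> Bicl Q \<and> pi_up Q S \<in> Bicl Q"
  using biclosed_pi_below biclosed_pi_above
  by (simp add: Bicl_def pi_down_eq_pi_below pi_up_eq_pi_above)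

lemma pi_down_absorb:
  assumes "S \<in> Bicl Q"
  shows "pi_down Q (pi_down Q S) = pi_down Q S \<and> pi_down Q (pi_up Q S) = pi_down Q S
    \<and> pi_up Q (pi_down Q S) = pi_up Q S"
  using pi_below_idem pi_below_pi_above[OF BiclD(1,2)[OF assms], of True]
    pi_above_pi_below[OF BiclD(3,2)[OF assms], of False]
  by (simp add: pi_down_eq_pi_below pi_up_eq_pi_above)

lemma pi_up_idem: "pi_up Q (pi_up Q S) = pi_up Q S"
  using pi_above_idem by (simp add: pi_up_eq_pi_above)

end

theorem proposition8p5:
  fixes Q :: "('v, 'a) bquiver"
  assumes "gentle Q"
    and "finite {\<sigma>. is_string Q \<sigma>}"
  shows "(\<forall>S\<in>Bicl Q. pi_down Q S \<subseteq> S \<and> S \<subseteq> pi_up Q S)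
   \<and> (\<forall>S\<in>Bicl Q. pi_down Q (pi_down Q S) = pi_down Q S \<and> pi_down Q (pi_up Q S) = pi_down Q S
        \<and> pi_up Q (pi_up Q S) = pi_up Q S \<and> pi_up Q (pi_down Q S) = pi_up Q S)
   \<and> (\<forall>S\<in>Bicl Q. \<forall>T\<in>Bicl Q. S \<subseteq> T \<longrightarrow> pi_down Q S \<subseteq> pi_down Q T \<and> pi_up Q S \<subseteq> pi_up Q T)
   \<and> (\<forall>S\<in>Bicl Q. \<forall>T\<in>Bicl Q. pi_down Q S = pi_down Q T \<longleftrightarrow> pi_up Q S = pi_up Q T)
   \<and> order_congruence (Bicl Q) (\<subseteq>)
       {(S, T). S \<in> Bicl Q \<and> T \<in> Bicl Q \<and> pi_down Q S = pi_down Q T}"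
proof -
  \<comment> \<open>of gentleness only the endpoints of arrows being vertices is used, and finiteness not at all\<close>
  interpret quiver Q using assms(1) by (rule gentle_quiver)
  have fibres: "pi_down Q S = pi_down Q T \<longleftrightarrow> pi_up Q S = pi_up Q T"
    if "S \<in> Bicl Q" "T \<in> Bicl Q" for S T
    using pi_down_absorb[OF that(1)] pi_down_absorb[OF that(2)] by (metis (no_types))
  have "order_congruence (Bicl Q) (\<subseteq>)
      {(S, T). S \<in> Bicl Q \<and> T \<in> Bicl Q \<and> pi_down Q S = pi_down Q T}"
    by (rule order_congruence_kernel; rule pi_down_pi_up_in_Bicl pi_down_subset_subset_pi_up
        pi_down_absorb pi_down_pi_up_mono; assumption)
  then show ?thesis
    using pi_down_subset_subset_pi_up pi_down_absorb pi_up_idem pi_down_pi_up_mono[of _ _ Q] fibres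
    by (intro conjI ballI impI) auto
qed

end
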